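(* Let $\mathscr A=\{H_1,\dots,H_p\}$ be a hyperplane arrangement in $\mathbb R^n$, each $H_s$ defined by a single nonzero linear equation $\sum_i a^s_ix_i=0$ with integer coefficients. For $\mathbf m\in\mathbb Z_{\ge0}^n$ let $P_{\mathbf m}(q)=\chi_{\mathscr A(\mathbf m)}(q)/\prod_{i\in\mathrm{supp}(\mathbf m)}m_i!$ (with $P_{\mathbf 0}=1$), the polynomial agreeing with ${}_{\mathbf m}\Pi_{\mathscr A}(q)$ for large primes $q$. Then $(-1)^{|\mathbf m|}P_{\mathbf m}(-q)\ge0$ for all $\mathbf m\in\mathbb Z_{\ge0}^n$ and all integers $q\ge0$. Equivalently, the power series $\sum_{\mathbf m}(-1)^{|\mathbf m|}P_{\mathbf m}(-q)x^{\mathbf m}$ (which the paper denotes $I(\mathscr A,-x)^{-q}$) has nonnegative coefficients for every integer $q\ge0$.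
   Context: $\mathrm{supp}(H_s)=\{i:a^s_i\ne0\}$, $\mathrm{supp}(\mathbf m)=\{i:m_i\ne0\}$, $|\mathbf m|=\sum_im_i$. $\mathscr A(\mathbf m)$ is the arrangement in $\mathbb R^{|\mathbf m|}$ with coordinates $x_{ir}$ ($i\in\mathrm{supp}(\mathbf m)$, $1\le r\le m_i$) consisting of the hyperplanes $x_{ir}-x_{is}=0$ for $i\in\mathrm{supp}(\mathbf m)$, $1\le r\neq s\le m_i$, together with, for each $s$ with $\mathrm{supp}(H_s)\subseteq\mathrm{supp}(\mathbf m)$ and each tuple $(k_i)_{i\in\mathrm{supp}(\mathbf m)}$ with $1\le k_i\le m_i$, the hyperplane $\sum_{i\in\mathrm{supp}(\mathbf m)}a^s_ix_{ik_i}=0$. ${}_{\mathbf m}\Pi_{\mathscr A}(q)$ is the number of maps $i\mapsto C_i\subseteq\mathbb F_q$ with $|C_i|=m_i$ such that for no $s$ is there a choice $x_i\in C_i$ ($i\in\mathrm{supp}(H_s)$) with $\sum_ia^s_ix_i\equiv0\pmod q$. For an arrangement $\mathscr B$ in $\mathbb R^N$, $\chi_{\mathscr B}(q)=\sum_{X\in L(\mathscr B)}\mu(\mathbb R^N,X)q^{\dim X}$, where $L(\mathscr B)$ is the intersection poset (including $\mathbb R^N$) ordered by reverse inclusion and $\mu$ its Möbius function. *)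

theory Defs
  imports "HOL-Analysis.Analysis" "HOL-Library.Function_Algebras"
begin

definition mobius :: "('a \<Rightarrow> 'a \<Rightarrow> bool) \<Rightarrow> 'a set \<Rightarrow> 'a \<Rightarrow> 'a \<Rightarrow> int" where
  "mobius le P = (THE mu. \<forall>x y. mu x y =
      (if x \<in> P \<and> y \<in> P \<and> le x y then
         (if x = y then 1 else - (\<Sum>z\<in>{z\<in>P. le x z \<and> le z y \<and> z \<noteq> y}. mu x z))
       else 0))"

text \<open>Vectors of the ambient space R^J are functions on the index set J, extended by 0.\<close>
definition ambient :: "'i set \<Rightarrow> ('i \<Rightarrow> real) set" where
  "ambient J = {x. \<forall>j. j \<notin> J \<longrightarrow> x j = 0}"

definition fdim :: "('i \<Rightarrow> real) set \<Rightarrow> nat" where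
  "fdim X = vector_space.dim (\<lambda>c (f::'i \<Rightarrow> real) j. c * f j) X"

definition hyp :: "'i set \<Rightarrow> ('i \<Rightarrow> real) \<Rightarrow> ('i \<Rightarrow> real) set" where
  "hyp J c = {x \<in> ambient J. (\<Sum>j\<in>J. c j * x j) = 0}"

definition intersection_poset :: "('i \<Rightarrow> real) set \<Rightarrow> ('i \<Rightarrow> real) set set \<Rightarrow> ('i \<Rightarrow> real) set set" where
  "intersection_poset V B = {V \<inter> \<Inter>S | S. S \<subseteq> B}"

definition char_poly :: "('i \<Rightarrow> real) set \<Rightarrow> ('i \<Rightarrow> real) set set \<Rightarrow> real \<Rightarrow> real" where
  "char_poly V B t = (\<Sum>X\<in>intersection_poset V B.
      of_int (mobius (\<lambda>X Y. Y \<subseteq> X) (intersection_poset V B) V X) * t ^ fdim X)"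

text \<open>The arrangement A in R^n is given by p integer coefficient vectors: H_s is
  sum_{i<n} a s i * x_i = 0, for s < p.  A multiplicity vector m in Z_{>=0}^n is a function
  nat => nat vanishing from n on.\<close>

definition supp_m :: "nat \<Rightarrow> (nat \<Rightarrow> nat) \<Rightarrow> nat set" where
  "supp_m n m = {i. i < n \<and> m i \<noteq> 0}"

definition supp_H :: "nat \<Rightarrow> (nat \<Rightarrow> nat \<Rightarrow> int) \<Rightarrow> nat \<Rightarrow> nat set" where
  "supp_H n a s = {i. i < n \<and> a s i \<noteq> 0}"

definition abs_m :: "nat \<Rightarrow> (nat \<Rightarrow> nat) \<Rightarrow> nat" where
  "abs_m n m = (\<Sum>i<n. m i)"

definition coords :: "nat \<Rightarrow> (nat \<Rightarrow> nat) \<Rightarrow> (nat \<times> nat) set" where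
  "coords n m = {(i, r). i \<in> supp_m n m \<and> 1 \<le> r \<and> r \<le> m i}"

definition diff_forms :: "nat \<Rightarrow> (nat \<Rightarrow> nat) \<Rightarrow> (nat \<times> nat \<Rightarrow> real) set" where
  "diff_forms n m = {(\<lambda>j. if j = (i, r) then 1 else if j = (i, r') then -1 else 0) | i r r'.
      i \<in> supp_m n m \<and> 1 \<le> r \<and> r \<le> m i \<and> 1 \<le> r' \<and> r' \<le> m i \<and> r \<noteq> r'}"

definition lift_forms :: "nat \<Rightarrow> nat \<Rightarrow> (nat \<Rightarrow> nat \<Rightarrow> int) \<Rightarrow> (nat \<Rightarrow> nat) \<Rightarrow> (nat \<times> nat \<Rightarrow> real) set" where
  "lift_forms n p a m = {(\<lambda>j. if fst j \<in> supp_m n m \<and> snd j = k (fst j) then of_int (a s (fst j)) else 0) | s k.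
      s < p \<and> supp_H n a s \<subseteq> supp_m n m \<and> (\<forall>i\<in>supp_m n m. 1 \<le> k i \<and> k i \<le> m i)}"

definition arr_m :: "nat \<Rightarrow> nat \<Rightarrow> (nat \<Rightarrow> nat \<Rightarrow> int) \<Rightarrow> (nat \<Rightarrow> nat) \<Rightarrow> (nat \<times> nat \<Rightarrow> real) set set" where
  "arr_m n p a m = hyp (coords n m) ` (diff_forms n m \<union> lift_forms n p a m)"

definition P_m :: "nat \<Rightarrow> nat \<Rightarrow> (nat \<Rightarrow> nat \<Rightarrow> int) \<Rightarrow> (nat \<Rightarrow> nat) \<Rightarrow> real \<Rightarrow> real" where
  "P_m n p a m t = char_poly (ambient (coords n m)) (arr_m n p a m) t
      / (\<Prod>i\<in>supp_m n m. fact (m i))"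

end

theory Submission
  imports Defs
begin

text \<open>By Whitney's theorem, if no hyperplane of B contains V, the Moebius function of the
  intersection poset is mu(V, X) = sum of (-1)^|S| over the S \<subseteq> B with V \<inter> \<Inter>S = X,
  so chi_B(t) = W(V, B, t) where W(X, B, t) = sum over S \<subseteq> B of (-1)^|S| t^dim(X \<inter> \<Inter>S).
  Removing a hyperplane H from B gives the deletion-restriction identity
  W(X, B, t) = W(X, B - {H}, t) - W(X \<inter> H, B - {H}, t), and dim (X \<inter> H) = dim X - 1 unless
  X \<subseteq> H. Hence, by induction on B, (-1)^dim X W(X, B, -t) is a sum of powers of t and so
  nonnegative for t \<ge> 0. For A(m) the ambient space has dimension |m|, no hyperplane contains it
  because every H_s has a nonzero coefficient, and the positive factor prod m_i! does not
  change the sign.\<close>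

interpretation fun_space: vector_space "\<lambda>c (f::'i \<Rightarrow> real) j. c * f j"
  by unfold_locales (auto simp: fun_eq_iff algebra_simps)

lemma fdim_eq_dim: "fdim X = fun_space.dim X"
  unfolding fdim_def ..

lemma sum_apply: "(sum f A) j = (\<Sum>a\<in>A. f a j)"
  by (induction A rule: infinite_finite_induct) auto

lemma (in vector_space) dim_insert_not_in_span:
  assumes "finite T" "S \<subseteq> span T" "x \<notin> span S"
  shows "dim (insert x S) = dim S + 1"
proof -
  obtain B where B: "B \<subseteq> span S" "independent B" "span S \<subseteq> span B" "card B = dim S"
    using basis_exists[of "span S"] by auto
  have "finite B"
    using independent_span_bound[OF assms(1) B(2)] B(1) span_mono[OF assms(2)] by (simp add: span_span)
  have span_B: "span B = span S"
    using B(1,3) span_superset by (auto simp: span_eq)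
  have "x \<notin> span B"
    using assms(3) span_B by simp
  then have "x \<notin> B"
    using span_base by blast
  have "dim (insert x S) = dim (span (insert x B))"
    using span_B by (metis dim_span span_insert)
  also have "\<dots> = card (insert x B)"
    using independent_insertI[OF \<open>x \<notin> span B\<close> B(2)] by (rule dim_span_eq_card_independent)
  also have "\<dots> = dim S + 1"
    using \<open>finite B\<close> \<open>x \<notin> B\<close> B(4) by simp
  finally show ?thesis .
qed

lemma ambient_subspace: "fun_space.subspace (ambient J)"
  by (auto simp: fun_space.subspace_def ambient_def)

lemma hyp_subspace: "fun_space.subspace (hyp J c)"
  by (auto simp: fun_space.subspace_def hyp_def ambient_def sum.distrib algebra_simps
      simp flip: sum_distrib_left)

lemma ambient_eq_span_indicators:
  assumes "finite J"
  shows "ambient J = fun_space.span ((\<lambda>j. indicator {j}) ` J)"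
proof
  show "ambient J \<subseteq> fun_space.span ((\<lambda>j. indicator {j}) ` J)"
  proof
    fix x assume x: "x \<in> ambient J"
    have "x = (\<Sum>j\<in>J. (\<lambda>i. x j * indicator {j} i))"
    proof
      fix i
      show "x i = (\<Sum>j\<in>J. (\<lambda>i. x j * indicator {j} i)) i"
        using x assms unfolding sum_apply
        by (cases "i \<in> J") (auto simp: ambient_def indicator_def of_bool_def if_distrib cong: if_cong)
    qed
    also have "\<dots> \<in> fun_space.span ((\<lambda>j. indicator {j}) ` J)"
      by (intro fun_space.span_sum fun_space.span_scale fun_space.span_base) auto
    finally show "x \<in> fun_space.span ((\<lambda>j. indicator {j}) ` J)" .
  qed
  show "fun_space.span ((\<lambda>j. indicator {j}) ` J) \<subseteq> ambient J"
    by (rule fun_space.span_minimal[OF _ ambient_subspace]) (auto simp: ambient_def indicator_def)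
qed

lemma independent_indicators: "fun_space.independent ((\<lambda>j. indicator {j} :: 'i \<Rightarrow> real) ` J)"
  unfolding fun_space.independent_explicit_finite_subsets
proof (intro allI impI ballI)
  fix S u v
  assume S: "S \<subseteq> (\<lambda>j. indicator {j}) ` J" "finite S"
    and comb: "(\<Sum>w\<in>S. (\<lambda>j. u w * w j)) = (0 :: 'i \<Rightarrow> real)" and v: "v \<in> S"
  obtain i where i: "v = indicator {i}" using S(1) v by blast
  have others_vanish: "w i = 0" if w: "w \<in> S - {v}" for w
  proof -
    obtain i' where i': "w = indicator {i'}" using w S(1) by blast
    have "i' \<noteq> i"
    proof
      assume "i' = i"
      then have "w = v" using i i' by simp
      with w show False by simp
    qed
    then show ?thesis using i' by simp
  qed
  have "0 = (\<Sum>w\<in>S. u w * w i)"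
    using fun_cong[OF comb, of i] by (simp add: sum_apply)
  also have "\<dots> = u v * v i + (\<Sum>w\<in>S - {v}. u w * w i)"
    by (rule sum.remove[OF S(2) v])
  also have "(\<Sum>w\<in>S - {v}. u w * w i) = 0"
    by (rule sum.neutral) (simp add: others_vanish)
  finally show "u v = 0"
    using i by simp
qed

lemma dim_ambient:
  fixes J :: "'i set"
  assumes "finite J"
  shows "fun_space.dim (ambient J) = card J"
proof -
  have "fun_space.dim (ambient J) = card ((\<lambda>j. indicator {j} :: 'i \<Rightarrow> real) ` J)"
    unfolding ambient_eq_span_indicators[OF assms]
    by (rule fun_space.dim_span_eq_card_independent[OF independent_indicators])
  also have "\<dots> = card J"
  proof (rule card_image, rule inj_onI)
    fix j j' assume "(indicator {j} :: 'i \<Rightarrow> real) = indicator {j'}"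
    then have "(indicator {j'} :: 'i \<Rightarrow> real) j = 1" by (metis indicator_simps(1) singletonI)
    then show "j = j'" by (simp add: indicator_def split: if_splits)
  qed
  finally show ?thesis .
qed

lemma dim_inter_hyp:
  fixes J :: "'i set"
  assumes J: "finite J" and X: "fun_space.subspace X" "X \<subseteq> ambient J"
    and x0: "x0 \<in> X" "x0 \<notin> hyp J c"
  shows "fun_space.dim X = fun_space.dim (X \<inter> hyp J c) + 1"
proof -
  let ?Y = "X \<inter> hyp J c"
  define f where "f x = (\<Sum>j\<in>J. c j * x j)" for x :: "'i \<Rightarrow> real"
  have Y: "fun_space.subspace ?Y"
    using X(1) hyp_subspace fun_space.subspace_inter by blast
  have "f x0 \<noteq> 0" using x0 X(2) by (auto simp: hyp_def f_def)
  have "x \<in> fun_space.span (insert x0 ?Y)" if x: "x \<in> X" for x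
  proof -
    define k where "k = f x / f x0"
    have "(\<lambda>j. x j - k * x0 j) \<in> X"
      using fun_space.subspace_diff[OF X(1) x fun_space.subspace_scale[OF X(1) x0(1)]]
      by (simp add: fun_diff_def)
    moreover have "f (\<lambda>j. x j - k * x0 j) = 0"
    proof -
      have "f (\<lambda>j. x j - k * x0 j) = f x - k * f x0"
        by (simp add: f_def right_diff_distrib sum_subtractf sum_distrib_left mult.left_commute)
      with \<open>f x0 \<noteq> 0\<close> show ?thesis by (simp add: k_def)
    qed
    moreover have "x \<in> ambient J" "x0 \<in> ambient J" using X(2) x x0(1) by auto
    ultimately have "(\<lambda>j. x j - k * x0 j) \<in> ?Y"
      by (auto simp: hyp_def f_def ambient_def)
    then show ?thesis
      unfolding fun_space.span_breakdown_eq by (auto simp: fun_diff_def intro: fun_space.span_base)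
  qed
  then have "fun_space.span X = fun_space.span (insert x0 ?Y)"
    using x0(1) by (auto simp: fun_space.span_eq intro: fun_space.span_base)
  then have "fun_space.dim X = fun_space.dim (insert x0 ?Y)"
    by (metis fun_space.dim_span)
  also have "\<dots> = fun_space.dim ?Y + 1"
  proof (rule fun_space.dim_insert_not_in_span)
    show "?Y \<subseteq> fun_space.span ((\<lambda>j. indicator {j}) ` J)"
      using X(2) ambient_eq_span_indicators[OF J] by auto
    show "x0 \<notin> fun_space.span ?Y"
      using x0(2) Y by (metis IntD2 fun_space.span_eq_iff)
    show "finite ((\<lambda>j. indicator {j}) ` J)"
      using J by simp
  qed
  finally show ?thesis .
qed

lemma ambient_not_subset_hyp:
  assumes "finite J" "j \<in> J" "c j \<noteq> 0"
  shows "\<not> ambient J \<subseteq> hyp J c"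
proof
  assume "ambient J \<subseteq> hyp J c"
  moreover have "indicator {j} \<in> ambient J"
    using assms(2) by (auto simp: ambient_def indicator_def)
  ultimately have "(\<Sum>i\<in>J. c i * indicator {j} i) = 0"
    by (auto simp: hyp_def)
  moreover have "(\<Sum>i\<in>J. c i * indicator {j} i) = c j"
    using assms(1,2) by (simp add: indicator_def of_bool_def if_distrib cong: if_cong)
  ultimately show False
    using assms(3) by simp
qed

definition mobius_row :: "('a \<Rightarrow> 'a \<Rightarrow> bool) \<Rightarrow> 'a set \<Rightarrow> 'a \<Rightarrow> ('a \<Rightarrow> int) \<Rightarrow> bool" where
  "mobius_row le P x f \<longleftrightarrow> (\<forall>y. f y =
      (if x \<in> P \<and> y \<in> P \<and> le x y then
         (if x = y then 1 else - (\<Sum>z\<in>{z\<in>P. le x z \<and> le z y \<and> z \<noteq> y}. f z))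
       else 0))"

lemma mobius_eq_The_row: "mobius le P = (THE mu. \<forall>x. mobius_row le P x (mu x))"
  unfolding mobius_def mobius_row_def by simp

locale finite_poset =
  fixes le :: "'a \<Rightarrow> 'a \<Rightarrow> bool" and P :: "'a set"
  assumes finite_P: "finite P"
    and trans: "\<lbrakk>x \<in> P; y \<in> P; z \<in> P; le x y; le y z\<rbrakk> \<Longrightarrow> le x z"
    and antisym: "\<lbrakk>x \<in> P; y \<in> P; le x y; le y x\<rbrakk> \<Longrightarrow> x = y"
begin

definition strictly_below :: "('a \<times> 'a) set" where
  "strictly_below = {(z, y). z \<in> P \<and> y \<in> P \<and> le z y \<and> z \<noteq> y}"

lemma wf_strictly_below: "wf strictly_below"
proof (rule wf_subset[OF wf_measure[of "\<lambda>z. card {w \<in> P. le w z \<and> w \<noteq> z}"]])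
  let ?down = "\<lambda>z. {w \<in> P. le w z \<and> w \<noteq> z}"
  show "strictly_below \<subseteq> Wellfounded.measure (\<lambda>z. card (?down z))"
  proof safe
    fix z y assume "(z, y) \<in> strictly_below"
    then have zy: "z \<in> P" "y \<in> P" "le z y" "z \<noteq> y" by (auto simp: strictly_below_def)
    have "?down z \<subseteq> ?down y"
      using zy trans antisym by blast
    moreover have "z \<in> ?down y - ?down z" using zy by auto
    ultimately have "?down z \<subset> ?down y" by blast
    then show "(z, y) \<in> Wellfounded.measure (\<lambda>z. card (?down z))"
      using finite_P by (auto intro: psubset_card_mono)
  qed
qed

lemma mobius_row_unique:
  assumes "mobius_row le P x f" "mobius_row le P x g"
  shows "f = g"
proof
  fix y show "f y = g y"
  proof (induction y rule: wf_induct[OF wf_strictly_below])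
    case (1 y)
    have "f z = g z" if "z \<in> {z\<in>P. le x z \<and> le z y \<and> z \<noteq> y}" "y \<in> P" for z
      using 1 that by (auto simp: strictly_below_def)
    then show ?case
      using assms unfolding mobius_row_def by (metis (no_types, lifting) sum.cong)
  qed
qed

lemma mobius_row_exists: "\<exists>f. mobius_row le P x f"
proof
  define F where "F g y = (if x \<in> P \<and> y \<in> P \<and> le x y then
      (if x = y then 1 else - (\<Sum>z\<in>{z\<in>P. le x z \<and> le z y \<and> z \<noteq> y}. g z)) else (0::int))"
    for g y
  define W where "W = wfrec strictly_below F"
  have "W y = F (cut W strictly_below y) y" for y
    unfolding W_def by (rule wfrec[OF wf_strictly_below])
  moreover have "cut W strictly_below y z = W z"
    if "z \<in> {z\<in>P. le x z \<and> le z y \<and> z \<noteq> y}" "y \<in> P" for y z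
    using that by (simp add: cut_apply strictly_below_def)
  ultimately show "mobius_row le P x W"
    unfolding mobius_row_def F_def by (auto intro!: sum.cong)
qed

lemma mobius_row_mobius: "mobius_row le P x (mobius le P x)"
proof -
  have "\<exists>!mu. \<forall>x. mobius_row le P x (mu x)"
  proof
    show "\<forall>x. mobius_row le P x ((\<lambda>x. SOME f. mobius_row le P x f) x)"
      by (rule allI, rule someI_ex[OF mobius_row_exists])
  next
    fix mu assume "\<forall>x. mobius_row le P x (mu x)"
    then show "mu = (\<lambda>x. SOME f. mobius_row le P x f)"
      by (intro ext mobius_row_unique) (auto intro: someI_ex[OF mobius_row_exists])
  qed
  then show ?thesis
    unfolding mobius_eq_The_row by (rule theI'[THEN spec])
qed

lemma mobius_eqI: "mobius_row le P x f \<Longrightarrow> mobius le P x = f"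
  using mobius_row_unique[OF mobius_row_mobius] by blast

end

lemma sum_Pow_insert:
  assumes "finite A" "a \<notin> A"
  shows "(\<Sum>S\<in>Pow (insert a A). h S) = (\<Sum>S\<in>Pow A. h S) + (\<Sum>S\<in>Pow A. h (insert a S))"
proof -
  have "inj_on (insert a) (Pow A)"
    using assms(2) by (auto simp: inj_on_def)
  then show ?thesis
    unfolding Pow_insert using assms by (subst sum.union_disjoint) (auto simp: sum.reindex)
qed

lemma sum_Pow_alternating:
  assumes "finite A" "A \<noteq> {}"
  shows "(\<Sum>S\<in>Pow A. (-1::'a::ring_1) ^ card S) = 0"
proof (rule sum_alternating_cancels)
  show "card {S \<in> Pow A. even (card S)} = card {S \<in> Pow A. odd (card S)}"
    using card_subsupersets_even_odd[of A "{}"] assms by auto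
qed (use assms in auto)

lemma intersection_poset_eq_image: "intersection_poset V B = (\<lambda>S. V \<inter> \<Inter>S) ` Pow B"
  unfolding intersection_poset_def by auto

lemma finite_poset_intersection_poset:
  "finite B \<Longrightarrow> finite_poset (\<lambda>X Y. Y \<subseteq> X) (intersection_poset V B)"
  by unfold_locales (auto simp: intersection_poset_eq_image)

definition whitney_weight :: "('i \<Rightarrow> real) set \<Rightarrow> ('i \<Rightarrow> real) set set \<Rightarrow> ('i \<Rightarrow> real) set \<Rightarrow> int" where
  "whitney_weight V B X = (\<Sum>S | S \<subseteq> B \<and> V \<inter> \<Inter>S = X. (-1) ^ card S)"

lemma sum_Pow_alternating_flats_above:
  assumes "finite B" "S0 \<subseteq> B" "V \<inter> \<Inter>S0 \<noteq> V"
  shows "(\<Sum>S | S \<subseteq> B \<and> V \<inter> \<Inter>S0 \<subseteq> V \<inter> \<Inter>S. (-1::int) ^ card S) = 0"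
proof -
  let ?Y = "V \<inter> \<Inter>S0"
  have flats_above: "{S. S \<subseteq> B \<and> ?Y \<subseteq> V \<inter> \<Inter>S} = Pow {H \<in> B. ?Y \<subseteq> H}"
    by auto
  obtain H where "H \<in> S0" using assms(3) by auto
  then have "H \<in> {H \<in> B. ?Y \<subseteq> H}" using assms(2) by auto
  then show ?thesis
    unfolding flats_above by (intro sum_Pow_alternating) (use assms(1) in auto)
qed

lemma sum_whitney_weight_above:
  assumes "finite B" "S0 \<subseteq> B" "V \<inter> \<Inter>S0 \<noteq> V"
  shows "(\<Sum>Z\<in>{Z \<in> intersection_poset V B. V \<inter> \<Inter>S0 \<subseteq> Z}. whitney_weight V B Z) = 0"
proof -
  let ?Y = "V \<inter> \<Inter>S0" and ?A = "{S. S \<subseteq> B \<and> V \<inter> \<Inter>S0 \<subseteq> V \<inter> \<Inter>S}"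
  have "{Z \<in> intersection_poset V B. ?Y \<subseteq> Z} = (\<lambda>S. V \<inter> \<Inter>S) ` ?A"
    unfolding intersection_poset_eq_image by auto
  then have "(\<Sum>Z\<in>{Z \<in> intersection_poset V B. ?Y \<subseteq> Z}. whitney_weight V B Z) =
      (\<Sum>Z\<in>(\<lambda>S. V \<inter> \<Inter>S) ` ?A. \<Sum>S\<in>{S \<in> ?A. V \<inter> \<Inter>S = Z}. (-1) ^ card S)"
  proof (rule sum.cong)
    fix Z assume "Z \<in> (\<lambda>S. V \<inter> \<Inter>S) ` ?A"
    then have "?Y \<subseteq> Z" by blast
    then have "{S. S \<subseteq> B \<and> V \<inter> \<Inter>S = Z} = {S \<in> ?A. V \<inter> \<Inter>S = Z}" by blast
    then show "whitney_weight V B Z = (\<Sum>S\<in>{S \<in> ?A. V \<inter> \<Inter>S = Z}. (-1) ^ card S)"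
      unfolding whitney_weight_def by simp
  qed
  also have "\<dots> = (\<Sum>S\<in>?A. (-1) ^ card S)"
    using assms(1) by (intro sum.image_gen[symmetric]) auto
  also have "\<dots> = 0"
    by (rule sum_Pow_alternating_flats_above[OF assms])
  finally show ?thesis .
qed

lemma mobius_intersection_poset:
  assumes "finite B" "\<forall>H\<in>B. \<not> V \<subseteq> H"
  shows "mobius (\<lambda>X Y. Y \<subseteq> X) (intersection_poset V B) V = whitney_weight V B"
proof (rule finite_poset.mobius_eqI[OF finite_poset_intersection_poset[OF assms(1)]])
  let ?L = "intersection_poset V B"
  have "V \<in> ?L"
    unfolding intersection_poset_eq_image by (rule image_eqI[of _ _ "{}"]) auto
  show "mobius_row (\<lambda>X Y. Y \<subseteq> X) ?L V (whitney_weight V B)"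
    unfolding mobius_row_def
  proof
    fix Y
    consider "Y \<notin> ?L" | "Y = V" | S0 where "S0 \<subseteq> B" "Y = V \<inter> \<Inter>S0" "Y \<noteq> V"
      unfolding intersection_poset_eq_image by blast
    then show "whitney_weight V B Y = (if V \<in> ?L \<and> Y \<in> ?L \<and> Y \<subseteq> V then (if V = Y then 1
        else - (\<Sum>Z\<in>{Z \<in> ?L. Z \<subseteq> V \<and> Y \<subseteq> Z \<and> Z \<noteq> Y}. whitney_weight V B Z)) else 0)"
    proof cases
      case 1
      then have fibre: "{S. S \<subseteq> B \<and> V \<inter> \<Inter>S = Y} = {}"
        unfolding intersection_poset_eq_image by auto
      show ?thesis using 1 unfolding whitney_weight_def fibre by simp
    next
      case 2
      then have fibre: "{S. S \<subseteq> B \<and> V \<inter> \<Inter>S = Y} = {{}}"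
        using assms(2) by auto
      show ?thesis using 2 \<open>V \<in> ?L\<close> unfolding whitney_weight_def fibre by simp
    next
      case 3
      let ?above = "{Z \<in> ?L. Z \<subseteq> V \<and> Y \<subseteq> Z \<and> Z \<noteq> Y}"
      have "Y \<in> ?L" "finite ?L"
        using 3 assms(1) unfolding intersection_poset_eq_image by auto
      then have "whitney_weight V B Y + (\<Sum>Z\<in>?above. whitney_weight V B Z) =
          (\<Sum>Z\<in>insert Y ?above. whitney_weight V B Z)"
        by simp
      also have "insert Y ?above = {Z \<in> ?L. V \<inter> \<Inter>S0 \<subseteq> Z}"
        using 3 \<open>Y \<in> ?L\<close> unfolding intersection_poset_eq_image by auto
      also have "(\<Sum>Z\<in>\<dots>. whitney_weight V B Z) = 0"
        using sum_whitney_weight_above[OF assms(1) 3(1)] 3 by simp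
      finally show ?thesis
        using 3 \<open>V \<in> ?L\<close> \<open>Y \<in> ?L\<close> by auto
    qed
  qed
qed

definition whitney_sum :: "('i \<Rightarrow> real) set \<Rightarrow> ('i \<Rightarrow> real) set set \<Rightarrow> real \<Rightarrow> real" where
  "whitney_sum X B t = (\<Sum>S\<in>Pow B. (-1) ^ card S * t ^ fdim (X \<inter> \<Inter>S))"

lemma char_poly_eq_whitney_sum:
  assumes "finite B" "\<forall>H\<in>B. \<not> V \<subseteq> H"
  shows "char_poly V B t = whitney_sum V B t"
proof -
  let ?h = "\<lambda>S. V \<inter> \<Inter>S"
  have "char_poly V B t = (\<Sum>X\<in>?h ` Pow B. of_int (whitney_weight V B X) * t ^ fdim X)"
    unfolding char_poly_def mobius_intersection_poset[OF assms] unfolding intersection_poset_eq_image ..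
  also have "\<dots> = (\<Sum>X\<in>?h ` Pow B. \<Sum>S\<in>{S \<in> Pow B. ?h S = X}. (-1) ^ card S * t ^ fdim (?h S))"
    unfolding whitney_weight_def by (intro sum.cong refl) (auto simp: sum_distrib_right)
  also have "\<dots> = whitney_sum V B t"
    unfolding whitney_sum_def using assms(1) by (intro sum.image_gen[symmetric]) auto
  finally show ?thesis .
qed

lemma whitney_sum_insert:
  assumes "finite B" "H \<notin> B"
  shows "whitney_sum X (insert H B) t = whitney_sum X B t - whitney_sum (X \<inter> H) B t"
proof -
  have "(-1) ^ card (insert H S) * t ^ fdim (X \<inter> \<Inter>(insert H S)) =
      - ((-1) ^ card S * t ^ fdim (X \<inter> H \<inter> \<Inter>S))" if "S \<in> Pow B" for S
  proof -
    have "finite S" "H \<notin> S" using that assms finite_subset by auto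
    then show ?thesis by (simp add: Int_assoc)
  qed
  then show ?thesis
    unfolding whitney_sum_def sum_Pow_insert[OF assms] by (simp add: sum_negf)
qed

lemma whitney_sum_alternating:
  fixes J :: "'i set"
  assumes "finite J" "finite B" "\<forall>H\<in>B. \<exists>c. H = hyp J c" "t \<ge> 0"
    and "fun_space.subspace X" "X \<subseteq> ambient J"
  shows "(-1) ^ fdim X * whitney_sum X B (- t) \<ge> 0"
  using assms(2,5,6,3)
proof (induction B arbitrary: X rule: finite_induct)
  case empty
  have "(-1) ^ fdim X * (- t) ^ fdim X = t ^ fdim X"
    by (simp flip: power_mult_distrib)
  then show ?case
    using \<open>t \<ge> 0\<close> by (simp add: whitney_sum_def)
next
  case (insert H B)
  obtain c where H: "H = hyp J c" using insert.prems(3) by auto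
  have X_H: "fun_space.subspace (X \<inter> H)" "X \<inter> H \<subseteq> ambient J"
    using fun_space.subspace_inter[OF insert.prems(1) hyp_subspace] insert.prems(2) H by auto
  show ?case
  proof (cases "X \<subseteq> H")
    case True
    then show ?thesis
      by (simp add: whitney_sum_insert[OF insert.hyps] Int_absorb2)
  next
    case False
    then obtain x0 where "x0 \<in> X" "x0 \<notin> hyp J c" using H by auto
    then have "fdim X = fdim (X \<inter> H) + 1"
      unfolding fdim_eq_dim H using dim_inter_hyp assms(1) insert.prems(1,2) by blast
    then have "(-1) ^ fdim X * whitney_sum X (insert H B) (- t) =
        (-1) ^ fdim X * whitney_sum X B (- t) + (-1) ^ fdim (X \<inter> H) * whitney_sum (X \<inter> H) B (- t)"
      by (simp add: whitney_sum_insert[OF insert.hyps] algebra_simps)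
    also have "\<dots> \<ge> 0"
      using insert.IH[OF insert.prems(1,2)] insert.IH[OF X_H] insert.prems(3) by simp
    finally show ?thesis .
  qed
qed

lemma char_poly_alternating:
  fixes J :: "'i set"
  assumes "finite J" "finite B" "\<forall>H\<in>B. \<exists>c. H = hyp J c" "\<forall>H\<in>B. \<not> ambient J \<subseteq> H" "t \<ge> 0"
  shows "(-1) ^ card J * char_poly (ambient J) B (- t) \<ge> 0"
  using whitney_sum_alternating[OF assms(1,2,3,5) ambient_subspace order_refl]
  by (simp add: char_poly_eq_whitney_sum[OF assms(2,4)] fdim_eq_dim dim_ambient[OF assms(1)])

lemma coords_eq_Sigma: "coords n m = Sigma (supp_m n m) (\<lambda>i. {1..m i})"
  unfolding coords_def by auto

lemma finite_coords: "finite (coords n m)"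
  unfolding coords_eq_Sigma supp_m_def by auto

lemma card_coords: "card (coords n m) = abs_m n m"
proof -
  have "card (coords n m) = (\<Sum>i\<in>supp_m n m. m i)"
    unfolding coords_eq_Sigma by (simp add: card_SigmaI supp_m_def)
  also have "\<dots> = (\<Sum>i<n. m i)"
    by (rule sum.mono_neutral_left) (auto simp: supp_m_def)
  finally show ?thesis
    unfolding abs_m_def .
qed

lemma finite_arr_m: "finite (arr_m n p a m)"
proof -
  let ?vals = "{0, 1, -1} \<union> (\<lambda>(s, i). real_of_int (a s i)) ` ({..<p} \<times> {..<n})"
  let ?funs = "{c. \<forall>x. (x \<in> coords n m \<longrightarrow> c x \<in> ?vals) \<and> (x \<notin> coords n m \<longrightarrow> c x = 0)}"
  have "diff_forms n m \<subseteq> ?funs"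
    unfolding diff_forms_def coords_def by (auto split: if_splits)
  moreover have "lift_forms n p a m \<subseteq> ?funs"
  proof
    fix c assume "c \<in> lift_forms n p a m"
    then obtain s k where "s < p" "\<forall>i\<in>supp_m n m. 1 \<le> k i \<and> k i \<le> m i"
      and "c = (\<lambda>j. if fst j \<in> supp_m n m \<and> snd j = k (fst j) then of_int (a s (fst j)) else 0)"
      unfolding lift_forms_def by blast
    then show "c \<in> ?funs"
      unfolding coords_def supp_m_def by auto
  qed
  moreover have "finite ?funs"
    by (rule finite_set_of_finite_funs[OF finite_coords]) auto
  ultimately have "finite (diff_forms n m \<union> lift_forms n p a m)"
    by (simp add: finite_subset)
  then show ?thesis
    unfolding arr_m_def by simp
qed

lemma arr_m_forms_nonzero:
  assumes "\<forall>s<p. \<exists>i<n. a s i \<noteq> 0" "c \<in> diff_forms n m \<union> lift_forms n p a m"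
  shows "\<exists>j\<in>coords n m. c j \<noteq> 0"
  using assms(2)
proof
  assume "c \<in> diff_forms n m"
  then obtain i r r' where "i \<in> supp_m n m" "1 \<le> r" "r \<le> m i" "r \<noteq> r'"
    and "c = (\<lambda>j. if j = (i, r) then 1 else if j = (i, r') then -1 else 0)"
    unfolding diff_forms_def by blast
  then show ?thesis
    unfolding coords_def by (intro bexI[of _ "(i, r)"]) auto
next
  assume "c \<in> lift_forms n p a m"
  then obtain s k where "s < p" "supp_H n a s \<subseteq> supp_m n m" "\<forall>i\<in>supp_m n m. 1 \<le> k i \<and> k i \<le> m i"
    and "c = (\<lambda>j. if fst j \<in> supp_m n m \<and> snd j = k (fst j) then of_int (a s (fst j)) else 0)"
    unfolding lift_forms_def by blast
  moreover obtain i where "i < n" "a s i \<noteq> 0"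
    using assms(1) \<open>s < p\<close> by auto
  ultimately show ?thesis
    unfolding coords_def supp_H_def by (intro bexI[of _ "(i, k i)"]) auto
qed

theorem corollary7p11:
  fixes n p :: nat and a :: "nat \<Rightarrow> nat \<Rightarrow> int" and m :: "nat \<Rightarrow> nat" and q :: nat
  assumes nonzero: "\<forall>s<p. \<exists>i<n. a s i \<noteq> 0"
    and m_dom: "\<forall>i\<ge>n. m i = 0"
  shows "(-1) ^ abs_m n m * P_m n p a m (- real q) \<ge> 0"
proof -
  have "\<forall>H\<in>arr_m n p a m. \<exists>c. H = hyp (coords n m) c"
    unfolding arr_m_def by blast
  moreover have "\<forall>H\<in>arr_m n p a m. \<not> ambient (coords n m) \<subseteq> H"
    using arr_m_forms_nonzero[OF nonzero] ambient_not_subset_hyp[OF finite_coords]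
    unfolding arr_m_def by blast
  ultimately have "(-1) ^ abs_m n m * char_poly (ambient (coords n m)) (arr_m n p a m) (- real q) \<ge> 0"
    using char_poly_alternating[OF finite_coords finite_arr_m] unfolding card_coords by simp
  moreover have "(\<Prod>i\<in>supp_m n m. fact (m i)) > (0::real)"
    by (rule prod_pos) auto
  ultimately show ?thesis
    unfolding P_m_def by (simp add: divide_nonneg_pos)
qed

end
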